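(* Let $K:[0,\infty)\to(0,\infty)$ be non-increasing with $K(0)=1$, and for $\sigma>0$ let $K_\sigma(x)=K(x/\sigma)$. Let $\mathcal{X}=\{\mathbf{x}_1,\dots,\mathbf{x}_n\}\subset\mathbb{R}^d$ and let $\mathcal{C}_1,\dots,\mathcal{C}_k$ be a partition of $\mathcal{X}$ into nonempty sets. For each $l\in[k]$, suppose $\mathcal{C}_l$ is connected at distance $\delta_l$. Let $\mathbf{U}\in\mathbb{R}^{n\times n}$ have as columns the eigenvectors of the normalised Laplacian $\mathbf{L}_{\mathrm{N}}$ of the graph $\mathcal{G}=(\mathcal{X},K_\sigma)$, and let $\mathbf{D}$ be the corresponding degree matrix. Then for each $i,j\in[n]$, $l\in[k]$ with $\mathbf{x}_i,\mathbf{x}_j\in\mathcal{C}_l$, $$\|\mathbf{D}_{ii}^{-1/2}\mathbf{U}_{i,1:k}-\mathbf{D}_{jj}^{-1/2}\mathbf{U}_{j,1:k}\|\le \max_{m\in[k]} n^{1.5}k^{0.5}\sqrt{\frac{K_\sigma(d(\mathcal{C}_m,\mathcal{X}\setminus\mathcal{C}_m))}{K_\sigma(\delta_l)}}.$$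
   Context: $[n]=\{1,\dots,n\}$; $\|\cdot\|$ is the Euclidean norm. For sets $S,U\subset\mathbb{R}^d$, $d(S,U)=\inf_{\mathbf{x}\in S,\mathbf{y}\in U}\|\mathbf{x}-\mathbf{y}\|$, with $d(S,\emptyset)=\infty$. A set $S$ is connected at distance $\delta$ if there is no partition of $S$ into $S_1,S_2$ with $d(S_1,S_2)>\delta$. The graph $(\mathcal{X},K_\sigma)$ has affinity matrix $\mathbf{A}_{ij}=K_\sigma(\|\mathbf{x}_i-\mathbf{x}_j\|)$ (including $i=j$), degree matrix $\mathbf{D}=\mathrm{diag}(\sum_j\mathbf{A}_{ij})$, and normalised Laplacian $\mathbf{L}_{\mathrm{N}}=\mathbf{I}-\mathbf{D}^{-1/2}\mathbf{A}\mathbf{D}^{-1/2}$. "The eigenvectors" means an orthonormal eigenbasis arranged as columns with eigenvalues in nondecreasing order. $\mathbf{U}_{i,1:k}$ denotes the first $k$ entries of row $i$. *)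

theory Defs
  imports "HOL-Analysis.Analysis"
begin

definition set_dist_e :: "'a::metric_space set \<Rightarrow> 'a set \<Rightarrow> ereal" where
  "set_dist_e S U = (if S = {} \<or> U = {} then \<infinity>
      else ereal (INF p\<in>S \<times> U. dist (fst p) (snd p)))"

definition connected_at_dist :: "'a::metric_space set \<Rightarrow> real \<Rightarrow> bool" where
  "connected_at_dist S \<delta> \<longleftrightarrow>
     \<not> (\<exists>S1 S2. S1 \<union> S2 = S \<and> S1 \<inter> S2 = {} \<and> S1 \<noteq> {} \<and> S2 \<noteq> {}
              \<and> set_dist_e S1 S2 > ereal \<delta>)"

definition Ksig :: "(real \<Rightarrow> real) \<Rightarrow> real \<Rightarrow> real \<Rightarrow> real" where
  "Ksig K \<sigma> x = K (x / \<sigma>)"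

text \<open>K_sigma evaluated at an extended-real distance; at infinity we take the limit
  value inf_{x>=0} K(x) (only relevant when a cluster is all of X).\<close>
definition Ksig_e :: "(real \<Rightarrow> real) \<Rightarrow> real \<Rightarrow> ereal \<Rightarrow> real" where
  "Ksig_e K \<sigma> e = (case e of ereal r \<Rightarrow> Ksig K \<sigma> r | _ \<Rightarrow> (INF x\<in>{0..}. K x))"

text \<open>Affinity, degree and normalised Laplacian of the graph (X, K_sigma),
  with points x 0, ..., x (n-1); matrices are functions on indices < n.\<close>
definition affinity :: "(real \<Rightarrow> real) \<Rightarrow> real \<Rightarrow> (nat \<Rightarrow> 'a::real_normed_vector) \<Rightarrow> nat \<Rightarrow> nat \<Rightarrow> real" where
  "affinity K \<sigma> x i j = Ksig K \<sigma> (norm (x i - x j))"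

definition degree :: "(real \<Rightarrow> real) \<Rightarrow> real \<Rightarrow> (nat \<Rightarrow> 'a::real_normed_vector) \<Rightarrow> nat \<Rightarrow> nat \<Rightarrow> real" where
  "degree K \<sigma> x n i = (\<Sum>j<n. affinity K \<sigma> x i j)"

definition norm_laplacian :: "(real \<Rightarrow> real) \<Rightarrow> real \<Rightarrow> (nat \<Rightarrow> 'a::real_normed_vector) \<Rightarrow> nat \<Rightarrow> nat \<Rightarrow> nat \<Rightarrow> real" where
  "norm_laplacian K \<sigma> x n i j =
     (if i = j then 1 else 0) - affinity K \<sigma> x i j / (sqrt (degree K \<sigma> x n i) * sqrt (degree K \<sigma> x n j))"

definition is_sorted_eigenbasis :: "nat \<Rightarrow> (nat \<Rightarrow> nat \<Rightarrow> real) \<Rightarrow> (nat \<Rightarrow> nat \<Rightarrow> real) \<Rightarrow> (nat \<Rightarrow> real) \<Rightarrow> bool" where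
  "is_sorted_eigenbasis n L U lam \<longleftrightarrow>
     (\<forall>a<n. \<forall>b<n. (\<Sum>i<n. U i a * U i b) = (if a = b then 1 else 0)) \<and>
     (\<forall>a<n. \<forall>i<n. (\<Sum>j<n. L i j * U j a) = lam a * U i a) \<and>
     (\<forall>a b. a \<le> b \<longrightarrow> b < n \<longrightarrow> lam a \<le> lam b)"

end

theory Submission
  imports Defs "HOL-Library.Transitive_Closure_Table"
begin

(* Write F_p for the row U_{p,1:k} / sqrt D_pp and kappa for the largest affinity across a
   cluster boundary. Summing the Rayleigh quotients of the first k eigenvectors gives
   sum_{p,q} A_pq |F_p - F_q|^2 = 2 (lam_0 + ... + lam_(k-1)) <= 2 k lam_(k-1).
   Courant-Fischer bounds lam_(k-1) <= 2 n kappa: test it on D^(1/2) h, where h is constant on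
   each cluster (k unknowns) and orthogonal to the first k - 1 eigenvectors (k - 1 equations);
   only pairs in different clusters contribute to the energy of h.
   Inside C_l, connectivity at distance delta_l joins x_i to x_j by a simple path of at most
   n - 1 steps, each of affinity at least K_sigma(delta_l); telescoping along it and
   Cauchy-Schwarz give K_sigma(delta_l) |F_i - F_j|^2 <= (n - 1) 4 n k kappa <= n^3 k kappa. *)

section \<open>Linear algebra\<close>

lemma homogeneous_system_nontrivial_solution:
  fixes M :: "nat \<Rightarrow> nat \<Rightarrow> real"
  assumes "finite S" "p < card S"
  shows "\<exists>c. (\<exists>m\<in>S. c m \<noteq> 0) \<and> (\<forall>r<p. (\<Sum>m\<in>S. M r m * c m) = 0)"
  using assms
proof (induction p arbitrary: S M)
  case 0
  then obtain m where "m \<in> S" by (metis card.empty ex_in_conv less_irrefl)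
  then show ?case by (intro exI[of _ "\<lambda>_. 1"]) auto
next
  case (Suc p)
  show ?case
  proof (cases "\<forall>m\<in>S. M p m = 0")
    case True
    obtain c where "\<exists>m\<in>S. c m \<noteq> 0" "\<forall>r<p. (\<Sum>m\<in>S. M r m * c m) = 0"
      using Suc.IH[of S M] Suc.prems by auto
    with True show ?thesis by (intro exI[of _ c]) (auto simp: less_Suc_eq)
  next
    case False
    then obtain m0 where m0: "m0 \<in> S" "M p m0 \<noteq> 0" by auto
    define S' where "S' = S - {m0}"
    define M' where "M' r m = M r m - M r m0 * M p m / M p m0" for r m
    have "finite S'" "p < card S'" using Suc.prems m0 by (auto simp: S'_def)
    from Suc.IH[OF this, of M'] obtain c' where
      c': "\<exists>m\<in>S'. c' m \<noteq> 0" "\<forall>r<p. (\<Sum>m\<in>S'. M' r m * c' m) = 0" by blast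
    \<comment> \<open>Gaussian elimination: choose c m0 so that equation p holds; the others reduce to the
      eliminated system M'.\<close>
    define c where "c = c'(m0 := - (\<Sum>m\<in>S'. M p m * c' m) / M p m0)"
    have split: "(\<Sum>m\<in>S. M r m * c m) = M r m0 * c m0 + (\<Sum>m\<in>S'. M r m * c' m)" for r
      using m0 Suc.prems(1) unfolding S'_def by (simp add: sum.remove c_def)
    show ?thesis
    proof (intro exI[of _ c] conjI allI impI)
      show "\<exists>m\<in>S. c m \<noteq> 0" using c' by (auto simp: c_def S'_def)
      fix r assume "r < Suc p"
      then consider "r = p" | "r < p" by linarith
      then show "(\<Sum>m\<in>S. M r m * c m) = 0"
      proof cases
        case 1 then show ?thesis using m0 by (simp add: split) (simp add: c_def)
      next
        case 2
        have "(\<Sum>m\<in>S'. M' r m * c' m)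
            = (\<Sum>m\<in>S'. M r m * c' m) - M r m0 / M p m0 * (\<Sum>m\<in>S'. M p m * c' m)"
          by (simp add: M'_def sum_subtractf sum_distrib_left algebra_simps)
        then show ?thesis using c'(2) 2 m0 by (simp add: split) (simp add: c_def field_simps)
      qed
    qed
  qed
qed

lemma sum_mult_sum_swap:
  "(\<Sum>i\<in>I. f i * (\<Sum>a\<in>J. g i a)) = (\<Sum>a\<in>J. \<Sum>i\<in>I. f i * (g i a :: real))"
  by (simp add: sum_distrib_left) (rule sum.swap)

lemma orthonormal_columns_expansion:
  fixes U :: "nat \<Rightarrow> nat \<Rightarrow> real"
  assumes orth: "\<And>a b. a < n \<Longrightarrow> b < n \<Longrightarrow> (\<Sum>i<n. U i a * U i b) = (if a = b then 1 else 0)"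
    and "i < n"
  shows "g i = (\<Sum>a<n. (\<Sum>j<n. g j * U j a) * U i a)"
proof -
  have coeff: "(\<Sum>i<n. U i b * (\<Sum>a<n. e a * U i a)) = e b" if "b < n" for e b
  proof -
    have "(\<Sum>i<n. U i b * (\<Sum>a<n. e a * U i a)) = (\<Sum>a<n. \<Sum>i<n. U i b * (e a * U i a))"
      by (rule sum_mult_sum_swap)
    also have "\<dots> = (\<Sum>a<n. e a * (\<Sum>i<n. U i a * U i b))"
      by (simp add: sum_distrib_left mult_ac)
    also have "\<dots> = (\<Sum>a<n. if a = b then e a else 0)"
      using orth that by (intro sum.cong) auto
    also have "\<dots> = e b" using that by simp
    finally show ?thesis .
  qed
  define r where "r i = g i - (\<Sum>a<n. (\<Sum>j<n. g j * U j a) * U i a)" for i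
  have r_orth: "(\<Sum>i<n. U i b * r i) = 0" if "b < n" for b
  proof -
    have "(\<Sum>i<n. U i b * r i)
        = (\<Sum>i<n. g i * U i b) - (\<Sum>i<n. U i b * (\<Sum>a<n. (\<Sum>j<n. g j * U j a) * U i a))"
      by (simp add: r_def right_diff_distrib sum_subtractf mult.commute)
    then show ?thesis using coeff[OF that] by simp
  qed
  \<comment> \<open>The n + 1 vectors U_0, ..., U_(n-1), r in R^n are linearly dependent; as r is
    orthogonal to the orthonormal U_a, r must vanish.\<close>
  define M where "M i a = (if a < n then U i a else r i)" for i a
  obtain e where e: "\<exists>a\<in>{..<Suc n}. e a \<noteq> 0" "\<forall>i<n. (\<Sum>a\<in>{..<Suc n}. M i a * e a) = 0"
    using homogeneous_system_nontrivial_solution[of "{..<Suc n}" n M] by auto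
  have dep: "(\<Sum>a<n. e a * U i a) + e n * r i = 0" if "i < n" for i
    using e(2) that by (simp add: M_def mult_ac)
  have "e b = 0" if "b < n" for b
  proof -
    have "0 = (\<Sum>i<n. U i b * ((\<Sum>a<n. e a * U i a) + e n * r i))" using dep by simp
    also have "\<dots> = e b + e n * (\<Sum>i<n. U i b * r i)"
      using coeff[OF that] by (simp add: distrib_left sum.distrib sum_distrib_left mult_ac)
    finally show ?thesis using r_orth[OF that] by simp
  qed
  then have "e n \<noteq> 0" using e(1) by (auto simp: less_Suc_eq)
  moreover have "e n * r i = 0" using dep[OF \<open>i < n\<close>] \<open>\<And>b. b < n \<Longrightarrow> e b = 0\<close> by simp
  ultimately show ?thesis by (simp add: r_def)
qed

lemma sorted_eigenbasis_quadratic_form_ge: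
  assumes eig: "is_sorted_eigenbasis n L U lam" and "t < n"
    and orth_g: "\<And>a. a < t \<Longrightarrow> (\<Sum>j<n. g j * U j a) = 0"
  shows "lam t * (\<Sum>i<n. (g i)\<^sup>2) \<le> (\<Sum>i<n. g i * (\<Sum>j<n. L i j * g j))"
proof -
  have orth: "\<And>a b. a < n \<Longrightarrow> b < n \<Longrightarrow> (\<Sum>i<n. U i a * U i b) = (if a = b then 1 else 0)"
    and eigvec: "\<And>a i. a < n \<Longrightarrow> i < n \<Longrightarrow> (\<Sum>j<n. L i j * U j a) = lam a * U i a"
    and sorted: "\<And>a b. a \<le> b \<Longrightarrow> b < n \<Longrightarrow> lam a \<le> lam b"
    using eig by (auto simp: is_sorted_eigenbasis_def)
  define c where "c a = (\<Sum>j<n. g j * U j a)" for a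
  have expand: "g i = (\<Sum>a<n. c a * U i a)" if "i < n" for i
    using orthonormal_columns_expansion[OF orth that] by (simp add: c_def)
  have coeff: "(\<Sum>i<n. g i * (\<Sum>a<n. e a * U i a)) = (\<Sum>a<n. e a * c a)" for e
    by (subst sum_mult_sum_swap) (simp add: c_def sum_distrib_left mult_ac)
  have "(\<Sum>j<n. L i j * g j) = (\<Sum>a<n. c a * lam a * U i a)" if "i < n" for i
  proof -
    have "(\<Sum>j<n. L i j * g j) = (\<Sum>a<n. \<Sum>j<n. L i j * (c a * U j a))"
      using expand by (simp add: sum_mult_sum_swap)
    also have "\<dots> = (\<Sum>a<n. c a * lam a * U i a)"
      using eigvec that by (simp add: sum_distrib_left[symmetric] mult_ac)
    finally show ?thesis .
  qed
  then have "(\<Sum>i<n. g i * (\<Sum>j<n. L i j * g j)) = (\<Sum>i<n. g i * (\<Sum>a<n. c a * lam a * U i a))"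
    by simp
  also have "\<dots> = (\<Sum>a<n. lam a * (c a)\<^sup>2)"
    using coeff[of "\<lambda>a. c a * lam a"] by (simp add: power2_eq_square mult_ac)
  finally have form: "(\<Sum>i<n. g i * (\<Sum>j<n. L i j * g j)) = (\<Sum>a<n. lam a * (c a)\<^sup>2)" .
  have "(\<Sum>i<n. (g i)\<^sup>2) = (\<Sum>i<n. g i * (\<Sum>a<n. c a * U i a))"
    using expand by (simp add: power2_eq_square)
  also have "\<dots> = (\<Sum>a<n. (c a)\<^sup>2)"
    using coeff[of c] by (simp add: power2_eq_square)
  finally have norm: "(\<Sum>i<n. (g i)\<^sup>2) = (\<Sum>a<n. (c a)\<^sup>2)" .
  have "lam t * (c a)\<^sup>2 \<le> lam a * (c a)\<^sup>2" if "a < n" for a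
  proof (cases "a < t")
    case True then show ?thesis using orth_g by (simp add: c_def)
  next
    case False then show ?thesis using sorted that by (intro mult_right_mono) auto
  qed
  then have "lam t * (\<Sum>a<n. (c a)\<^sup>2) \<le> (\<Sum>a<n. lam a * (c a)\<^sup>2)"
    unfolding sum_distrib_left by (intro sum_mono) auto
  then show ?thesis by (simp only: form norm)
qed

section \<open>The normalized Laplacian\<close>

definition normalized_laplacian :: "(nat \<Rightarrow> nat \<Rightarrow> real) \<Rightarrow> (nat \<Rightarrow> real) \<Rightarrow> nat \<Rightarrow> nat \<Rightarrow> real" where
  "normalized_laplacian A d i j = (if i = j then 1 else 0) - A i j / (sqrt (d i) * sqrt (d j))"

lemma normalized_laplacian_quadratic_form:
  fixes A :: "nat \<Rightarrow> nat \<Rightarrow> real"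
  assumes degree: "\<And>p. p < n \<Longrightarrow> d p = (\<Sum>q<n. A p q)"
    and d_pos: "\<And>p. p < n \<Longrightarrow> 0 < d p"
    and sym: "\<And>p q. A p q = A q p"
  shows "(\<Sum>i<n. g i * (\<Sum>j<n. normalized_laplacian A d i j * g j))
       = (\<Sum>p<n. \<Sum>q<n. A p q * (g p / sqrt (d p) - g q / sqrt (d q))\<^sup>2) / 2"
proof -
  define h where "h p = g p / sqrt (d p)" for p
  have row: "g p * (\<Sum>q<n. normalized_laplacian A d p q * g q) = (\<Sum>q<n. A p q * ((h p)\<^sup>2 - h p * h q))"
    if "p < n" for p
  proof -
    have sp: "0 < sqrt (d p)" using d_pos that by simp
    have "normalized_laplacian A d p q * g q = (if p = q then g q else 0) - A p q * h q / sqrt (d p)"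
      if "q < n" for q
      using sp d_pos[OF that] by (simp add: normalized_laplacian_def h_def field_simps)
    then have "(\<Sum>q<n. normalized_laplacian A d p q * g q) = g p - (\<Sum>q<n. A p q * h q) / sqrt (d p)"
      using \<open>p < n\<close> by (simp add: sum_subtractf sum_divide_distrib)
    then have "g p * (\<Sum>q<n. normalized_laplacian A d p q * g q)
        = g p * g p - h p * (\<Sum>q<n. A p q * h q)"
      by (simp add: h_def right_diff_distrib)
    also have "g p * g p = d p * (h p)\<^sup>2"
      using sp by (simp add: h_def power2_eq_square)
    finally show ?thesis
      using degree[OF that] by (simp add: sum_distrib_right sum_distrib_left sum_subtractf algebra_simps)
  qed
  have swap: "(\<Sum>p<n. \<Sum>q<n. A p q * ((h q)\<^sup>2 - h p * h q)) = (\<Sum>p<n. \<Sum>q<n. A p q * ((h p)\<^sup>2 - h p * h q))"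
    by (subst sum.swap) (simp add: sym mult.commute)
  have "(\<Sum>p<n. \<Sum>q<n. A p q * (h p - h q)\<^sup>2)
      = (\<Sum>p<n. \<Sum>q<n. A p q * ((h p)\<^sup>2 - h p * h q)) + (\<Sum>p<n. \<Sum>q<n. A p q * ((h q)\<^sup>2 - h p * h q))"
    by (simp add: sum.distrib[symmetric] power2_diff algebra_simps)
  then show ?thesis using row swap by (simp add: h_def)
qed

lemma weighted_sq_diff_sum_le_of_cross_le:
  fixes A :: "nat \<Rightarrow> nat \<Rightarrow> real" and h :: "nat \<Rightarrow> real"
  assumes "0 \<le> \<kappa>" and cross: "\<And>p q. p < n \<Longrightarrow> q < n \<Longrightarrow> h p \<noteq> h q \<Longrightarrow> A p q \<le> \<kappa>"
  shows "(\<Sum>p<n. \<Sum>q<n. A p q * (h p - h q)\<^sup>2) \<le> 4 * real n * \<kappa> * (\<Sum>p<n. (h p)\<^sup>2)"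
proof -
  have "A p q * (h p - h q)\<^sup>2 \<le> \<kappa> * (2 * ((h p)\<^sup>2 + (h q)\<^sup>2))" if "p < n" "q < n" for p q
  proof (cases "h p = h q")
    case False
    have "(h p - h q)\<^sup>2 \<le> 2 * ((h p)\<^sup>2 + (h q)\<^sup>2)"
      using zero_le_power2[of "h p + h q"] by (simp add: power2_diff power2_sum)
    then show ?thesis using cross[OF that False] \<open>0 \<le> \<kappa>\<close>
      by (meson mult_mono zero_le_power2 order_trans)
  qed (use \<open>0 \<le> \<kappa>\<close> in simp)
  then have "(\<Sum>p<n. \<Sum>q<n. A p q * (h p - h q)\<^sup>2) \<le> (\<Sum>p<n. \<Sum>q<n. \<kappa> * (2 * ((h p)\<^sup>2 + (h q)\<^sup>2)))"
    by (intro sum_mono) auto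
  also have "\<dots> = 4 * real n * \<kappa> * (\<Sum>p<n. (h p)\<^sup>2)"
    by (simp add: distrib_left sum.distrib sum_distrib_left mult_ac)
  finally show ?thesis .
qed

lemma normalized_laplacian_eigenvalue_le:
  fixes A :: "nat \<Rightarrow> nat \<Rightarrow> real" and cl :: "nat \<Rightarrow> nat"
  assumes eig: "is_sorted_eigenbasis n (normalized_laplacian A d) U lam"
    and degree: "\<And>p. p < n \<Longrightarrow> d p = (\<Sum>q<n. A p q)"
    and d_ge: "\<And>p. p < n \<Longrightarrow> 1 \<le> d p"
    and sym: "\<And>p q. A p q = A q p"
    and cl_lt: "\<And>p. p < n \<Longrightarrow> cl p < k"
    and cl_onto: "\<And>m. m < k \<Longrightarrow> \<exists>p<n. cl p = m"
    and "0 \<le> \<kappa>" and cross: "\<And>p q. p < n \<Longrightarrow> q < n \<Longrightarrow> cl p \<noteq> cl q \<Longrightarrow> A p q \<le> \<kappa>"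
    and "0 < k" "k \<le> n"
  shows "lam (k - 1) \<le> 2 * real n * \<kappa>"
proof -
  have d_pos: "\<And>p. p < n \<Longrightarrow> 0 < d p" using d_ge by fastforce
  define M where "M b m = (\<Sum>p\<in>{p\<in>{..<n}. cl p = m}. sqrt (d p) * U p b)" for b m
  obtain c where c_nz: "\<exists>m\<in>{..<k}. c m \<noteq> 0"
    and c_orth: "\<forall>b<k - 1. (\<Sum>m\<in>{..<k}. M b m * c m) = 0"
    using homogeneous_system_nontrivial_solution[of "{..<k}" "k - 1" M] \<open>0 < k\<close> by auto
  define h where "h p = c (cl p)" for p
  define g where "g p = sqrt (d p) * h p" for p
  have g_orth: "(\<Sum>p<n. g p * U p b) = 0" if "b < k - 1" for b
  proof -
    have "(\<Sum>p<n. g p * U p b) = (\<Sum>m<k. \<Sum>p\<in>{p\<in>{..<n}. cl p = m}. g p * U p b)"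
      using cl_lt by (intro sum.group[symmetric]) auto
    also have "\<dots> = (\<Sum>m<k. M b m * c m)"
      by (intro sum.cong refl) (simp add: M_def g_def h_def sum_distrib_left mult_ac)
    finally show ?thesis using c_orth that by simp
  qed
  have g_pos: "0 < (\<Sum>p<n. (g p)\<^sup>2)"
  proof -
    obtain m p where "m < k" "c m \<noteq> 0" "p < n" "cl p = m" using c_nz cl_onto by blast
    then have "g p \<noteq> 0" using d_pos[of p] by (simp add: g_def h_def)
    with \<open>p < n\<close> show ?thesis by (intro sum_pos2[of _ p]) auto
  qed
  have h_le_g: "(\<Sum>p<n. (h p)\<^sup>2) \<le> (\<Sum>p<n. (g p)\<^sup>2)"
    using d_ge by (intro sum_mono) (simp add: g_def power_mult_distrib mult_le_cancel_right1)
  have "lam (k - 1) * (\<Sum>p<n. (g p)\<^sup>2) \<le> (\<Sum>i<n. g i * (\<Sum>j<n. normalized_laplacian A d i j * g j))"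
    using sorted_eigenbasis_quadratic_form_ge[OF eig _ g_orth] \<open>0 < k\<close> \<open>k \<le> n\<close> by simp
  also have "\<dots> = (\<Sum>p<n. \<Sum>q<n. A p q * (h p - h q)\<^sup>2) / 2"
  proof -
    have "g p / sqrt (d p) = h p" if "p < n" for p using d_pos[OF that] by (simp add: g_def)
    then show ?thesis using normalized_laplacian_quadratic_form[OF degree d_pos sym, of g] by simp
  qed
  also have "\<dots> \<le> 2 * real n * \<kappa> * (\<Sum>p<n. (h p)\<^sup>2)"
  proof -
    have "(\<Sum>p<n. \<Sum>q<n. A p q * (h p - h q)\<^sup>2) \<le> 4 * real n * \<kappa> * (\<Sum>p<n. (h p)\<^sup>2)"
      using cross by (intro weighted_sq_diff_sum_le_of_cross_le[OF \<open>0 \<le> \<kappa>\<close>]) (metis h_def)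
    then show ?thesis by simp
  qed
  also have "\<dots> \<le> 2 * real n * \<kappa> * (\<Sum>p<n. (g p)\<^sup>2)"
    using h_le_g \<open>0 \<le> \<kappa>\<close> by (intro mult_left_mono) auto
  finally show ?thesis using g_pos by simp
qed

lemma normalized_laplacian_eigenvector_energy:
  fixes A :: "nat \<Rightarrow> nat \<Rightarrow> real"
  assumes eig: "is_sorted_eigenbasis n (normalized_laplacian A d) U lam"
    and degree: "\<And>p. p < n \<Longrightarrow> d p = (\<Sum>q<n. A p q)"
    and d_pos: "\<And>p. p < n \<Longrightarrow> 0 < d p"
    and sym: "\<And>p q. A p q = A q p"
    and "a < n"
  shows "(\<Sum>p<n. \<Sum>q<n. A p q * (U p a / sqrt (d p) - U q a / sqrt (d q))\<^sup>2) = 2 * lam a"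
proof -
  have "(\<Sum>i<n. U i a * (\<Sum>j<n. normalized_laplacian A d i j * U j a)) = (\<Sum>i<n. lam a * (U i a * U i a))"
    using eig \<open>a < n\<close> by (intro sum.cong) (auto simp: is_sorted_eigenbasis_def)
  also have "\<dots> = lam a"
    using eig \<open>a < n\<close> by (simp add: is_sorted_eigenbasis_def sum_distrib_left[symmetric])
  finally show ?thesis
    using normalized_laplacian_quadratic_form[OF degree d_pos sym, of "\<lambda>p. U p a"] by simp
qed

lemma spectral_embedding_energy_le:
  fixes A :: "nat \<Rightarrow> nat \<Rightarrow> real" and cl :: "nat \<Rightarrow> nat"
  assumes eig: "is_sorted_eigenbasis n (normalized_laplacian A d) U lam"
    and degree: "\<And>p. p < n \<Longrightarrow> d p = (\<Sum>q<n. A p q)"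
    and d_ge: "\<And>p. p < n \<Longrightarrow> 1 \<le> d p"
    and sym: "\<And>p q. A p q = A q p"
    and cl_lt: "\<And>p. p < n \<Longrightarrow> cl p < k"
    and cl_onto: "\<And>m. m < k \<Longrightarrow> \<exists>p<n. cl p = m"
    and "0 \<le> \<kappa>" and cross: "\<And>p q. p < n \<Longrightarrow> q < n \<Longrightarrow> cl p \<noteq> cl q \<Longrightarrow> A p q \<le> \<kappa>"
    and "0 < k"
  shows "(\<Sum>p<n. \<Sum>q<n. A p q * (\<Sum>a<k. (U p a / sqrt (d p) - U q a / sqrt (d q))\<^sup>2))
       \<le> 4 * real n * real k * \<kappa>"
proof -
  have d_pos: "\<And>p. p < n \<Longrightarrow> 0 < d p" using d_ge by fastforce
  have "{..<k} \<subseteq> cl ` {..<n}" using cl_onto by blast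
  then have "k \<le> n" using card_mono[OF _ \<open>{..<k} \<subseteq> _\<close>] card_image_le[of "{..<n}" cl] by simp
  have sorted: "lam a \<le> lam (k - 1)" if "a < k" for a
    using eig that \<open>k \<le> n\<close> by (simp add: is_sorted_eigenbasis_def)
  have "(\<Sum>p<n. \<Sum>q<n. A p q * (\<Sum>a<k. (U p a / sqrt (d p) - U q a / sqrt (d q))\<^sup>2))
      = (\<Sum>a<k. \<Sum>p<n. \<Sum>q<n. A p q * (U p a / sqrt (d p) - U q a / sqrt (d q))\<^sup>2)"
    by (simp add: sum_distrib_left sum.swap[of _ "{..<k}"])
  also have "\<dots> = (\<Sum>a<k. 2 * lam a)"
    using normalized_laplacian_eigenvector_energy[OF eig degree d_pos sym] \<open>k \<le> n\<close>
    by (intro sum.cong) auto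
  also have "\<dots> \<le> (\<Sum>a<k. 2 * lam (k - 1))"
    using sorted by (intro sum_mono) auto
  also have "\<dots> = real k * (2 * lam (k - 1))" by simp
  also have "\<dots> \<le> real k * (4 * real n * \<kappa>)"
    using normalized_laplacian_eigenvalue_le[OF eig degree d_ge sym cl_lt cl_onto
        \<open>0 \<le> \<kappa>\<close> cross \<open>0 < k\<close> \<open>k \<le> n\<close>] by (intro mult_left_mono) (auto simp: mult_ac)
  finally show ?thesis by (simp add: mult_ac)
qed

section \<open>Paths and set distances\<close>

lemma rtrancl_path_telescope:
  fixes \<phi> :: "'a \<Rightarrow> 'b::ab_group_add"
  assumes "rtrancl_path R x ps z"
  shows "\<phi> x - \<phi> z = (\<Sum>e\<leftarrow>zip (x # ps) ps. \<phi> (fst e) - \<phi> (snd e))"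
  using assms
proof induction
  case (step x y ys z)
  have "\<phi> x - \<phi> z = (\<phi> x - \<phi> y) + (\<phi> y - \<phi> z)" by simp
  with step.IH show ?case by simp
qed simp

lemma distinct_rtrancl_path_sq_diff_le:
  fixes \<phi> :: "'a \<Rightarrow> real"
  assumes path: "rtrancl_path R x ps z" and "distinct (x # ps)"
  shows "(\<phi> x - \<phi> z)\<^sup>2 \<le> real (length ps) * (\<Sum>e\<in>set (zip (x # ps) ps). (\<phi> (fst e) - \<phi> (snd e))\<^sup>2)"
proof -
  have "distinct (zip (x # ps) ps)" using \<open>distinct (x # ps)\<close> by (rule distinct_zipI1)
  then have "\<phi> x - \<phi> z = (\<Sum>e\<in>set (zip (x # ps) ps). \<phi> (fst e) - \<phi> (snd e))"
    and "card (set (zip (x # ps) ps)) = length ps"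
    using rtrancl_path_telescope[OF path, of \<phi>] by (simp_all add: sum_list_distinct_conv_sum_set distinct_card)
  then show ?thesis
    using sum_squared_le_sum_of_squares[of _ "set (zip (x # ps) ps)"] by (simp add: mult.commute)
qed

lemma reachable_sq_diff_le_energy:
  fixes A :: "nat \<Rightarrow> nat \<Rightarrow> real" and f :: "nat \<Rightarrow> nat \<Rightarrow> real"
  assumes reach: "R\<^sup>*\<^sup>* i j" and "i < n"
    and R: "\<And>p q. R p q \<Longrightarrow> p < n \<and> q < n \<and> \<kappa> \<le> A p q"
    and "0 \<le> \<kappa>" and A_nonneg: "\<And>p q. p < n \<Longrightarrow> q < n \<Longrightarrow> 0 \<le> A p q"
  shows "\<kappa> * (\<Sum>a<k. (f a i - f a j)\<^sup>2)
       \<le> real (n - 1) * (\<Sum>p<n. \<Sum>q<n. A p q * (\<Sum>a<k. (f a p - f a q)\<^sup>2))"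
proof -
  define W where "W p q = (\<Sum>a<k. (f a p - f a q)\<^sup>2)" for p q
  have W_nonneg: "0 \<le> W p q" for p q by (simp add: W_def sum_nonneg)
  obtain ps where path: "rtrancl_path R i ps j" and distinct: "distinct (i # ps)"
    using reach by (meson rtranclp_eq_rtrancl_path rtrancl_path_distinct)
  define E where "E = set (zip (i # ps) ps)"
  have edges: "R p q" if "(p, q) \<in> E" for p q
    using that rtrancl_path_nth[OF path] by (auto simp: E_def in_set_zip)
  have "set (i # ps) \<subseteq> {..<n}"
    using \<open>i < n\<close> rtrancl_path_Range[OF path] R by fastforce
  then have "length ps \<le> n - 1"
    using card_mono[of "{..<n}" "set (i # ps)"] distinct_card[OF distinct] by simp
  have "W i j \<le> (\<Sum>a<k. real (length ps) * (\<Sum>e\<in>E. (f a (fst e) - f a (snd e))\<^sup>2))"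
    unfolding W_def E_def by (intro sum_mono distinct_rtrancl_path_sq_diff_le[OF path distinct])
  also have "\<dots> = real (length ps) * (\<Sum>e\<in>E. W (fst e) (snd e))"
    unfolding W_def sum_distrib_left by (rule sum.swap)
  finally have "\<kappa> * W i j \<le> real (length ps) * (\<Sum>e\<in>E. \<kappa> * W (fst e) (snd e))"
    using \<open>0 \<le> \<kappa>\<close> by (simp add: sum_distrib_left[symmetric] mult_left_mono mult.left_commute)
  also have "\<dots> \<le> real (length ps) * (\<Sum>e\<in>E. A (fst e) (snd e) * W (fst e) (snd e))"
    using R[OF edges] W_nonneg by (intro mult_left_mono sum_mono mult_right_mono) auto
  also have "\<dots> \<le> real (length ps) * (\<Sum>e\<in>{..<n} \<times> {..<n}. A (fst e) (snd e) * W (fst e) (snd e))"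
    using R[OF edges] A_nonneg W_nonneg by (intro mult_left_mono sum_mono2) auto
  also have "\<dots> \<le> real (n - 1) * (\<Sum>e\<in>{..<n} \<times> {..<n}. A (fst e) (snd e) * W (fst e) (snd e))"
    using \<open>length ps \<le> n - 1\<close> A_nonneg W_nonneg by (intro mult_right_mono sum_nonneg) auto
  finally show ?thesis by (simp add: W_def sum.cartesian_product split_beta)
qed

lemma set_dist_e_eq_ereal:
  assumes "S \<noteq> {}" "U \<noteq> {}"
  obtains r where "set_dist_e S U = ereal r" "0 \<le> r" "\<forall>a\<in>S. \<forall>b\<in>U. r \<le> dist a b"
proof
  let ?r = "INF p\<in>S \<times> U. dist (fst p) (snd p)"
  show "set_dist_e S U = ereal ?r" using assms by (simp add: set_dist_e_def)
  show "0 \<le> ?r" using assms by (intro cINF_greatest) auto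
  have "bdd_below ((\<lambda>p. dist (fst p) (snd p)) ` (S \<times> U))"
    by (rule bdd_belowI2[of _ 0]) simp
  then show "\<forall>a\<in>S. \<forall>b\<in>U. ?r \<le> dist a b"
    by (auto intro: cINF_lower2)
qed

lemma set_dist_e_attained:
  assumes "finite S" "finite U" "S \<noteq> {}" "U \<noteq> {}"
  obtains a b where "a \<in> S" "b \<in> U" "set_dist_e S U = ereal (dist a b)"
proof -
  have "(INF p\<in>S \<times> U. dist (fst p) (snd p)) \<in> (\<lambda>p. dist (fst p) (snd p)) ` (S \<times> U)"
    using assms by (simp add: cInf_eq_Min)
  then obtain p where "p \<in> S \<times> U" "(INF p\<in>S \<times> U. dist (fst p) (snd p)) = dist (fst p) (snd p)"
    by blast
  with assms show ?thesis by (intro that[of "fst p" "snd p"]) (auto simp: set_dist_e_def)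
qed

lemma connected_at_dist_reachable:
  fixes x :: "'b \<Rightarrow> 'a::metric_space"
  assumes conn: "connected_at_dist (x ` P) \<delta>" and "finite P" "inj_on x P" "i \<in> P" "j \<in> P"
  shows "(\<lambda>p q. p \<in> P \<and> q \<in> P \<and> dist (x p) (x q) \<le> \<delta>)\<^sup>*\<^sup>* i j"
    (is "?R\<^sup>*\<^sup>* i j")
proof (rule ccontr)
  assume "\<not> ?R\<^sup>*\<^sup>* i j"
  define P1 where "P1 = {q \<in> P. ?R\<^sup>*\<^sup>* i q}"
  have "P1 \<noteq> {}" "P - P1 \<noteq> {}" using \<open>i \<in> P\<close> \<open>j \<in> P\<close> \<open>\<not> ?R\<^sup>*\<^sup>* i j\<close> by (auto simp: P1_def)
  moreover have "x ` P1 \<union> x ` (P - P1) = x ` P" "x ` P1 \<inter> x ` (P - P1) = {}"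
    using \<open>inj_on x P\<close> by (auto simp: P1_def inj_on_def)
  ultimately have "\<not> set_dist_e (x ` P1) (x ` (P - P1)) > ereal \<delta>"
    using conn unfolding connected_at_dist_def by blast
  moreover obtain a b where
    "a \<in> P1" "b \<in> P - P1" "set_dist_e (x ` P1) (x ` (P - P1)) = ereal (dist (x a) (x b))"
  proof -
    have "finite (x ` P1)" "finite (x ` (P - P1))" "x ` P1 \<noteq> {}" "x ` (P - P1) \<noteq> {}"
      using \<open>finite P\<close> \<open>P1 \<noteq> {}\<close> \<open>P - P1 \<noteq> {}\<close> by (simp_all add: P1_def)
    then obtain a' b' where "a' \<in> x ` P1" "b' \<in> x ` (P - P1)"
      "set_dist_e (x ` P1) (x ` (P - P1)) = ereal (dist a' b')"
      by (rule set_dist_e_attained)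
    then show ?thesis using that by blast
  qed
  ultimately have "?R a b" by (auto simp: P1_def)
  with \<open>a \<in> P1\<close> have "?R\<^sup>*\<^sup>* i b" by (auto simp: P1_def intro: rtranclp.rtrancl_into_rtrancl)
  with \<open>b \<in> P - P1\<close> show False by (simp add: P1_def)
qed

lemma partition_labelling:
  assumes disjoint: "disjoint_family_on C {..<k}"
    and cover: "(\<Union>l<k. C l) = X"
  obtains cl where "\<And>y. y \<in> X \<Longrightarrow> cl y < k"
    and "\<And>y m. y \<in> X \<Longrightarrow> m < k \<Longrightarrow> y \<in> C m \<longleftrightarrow> cl y = m"
proof -
  define cl where "cl y = (SOME m. m < k \<and> y \<in> C m)" for y
  have cl: "cl y < k \<and> y \<in> C (cl y)" if "y \<in> X" for y
    unfolding cl_def by (rule someI_ex) (use that cover in auto)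
  show thesis
  proof (rule that)
    show "cl y < k" if "y \<in> X" for y using cl[OF that] by simp
    show "y \<in> C m \<longleftrightarrow> cl y = m" if "y \<in> X" "m < k" for y m
      using cl[OF \<open>y \<in> X\<close>] disjoint \<open>m < k\<close> unfolding disjoint_family_on_def by auto
  qed
qed

section \<open>Kernel graphs\<close>

lemma affinity_commute: "affinity K \<sigma> x p q = affinity K \<sigma> x q p"
  by (simp add: affinity_def norm_minus_commute)

lemma norm_laplacian_eq_normalized_laplacian:
  "norm_laplacian K \<sigma> x n = normalized_laplacian (affinity K \<sigma> x) (degree K \<sigma> x n)"
  by (simp add: fun_eq_iff norm_laplacian_def normalized_laplacian_def)

locale decreasing_kernel =
  fixes K :: "real \<Rightarrow> real" and \<sigma> :: real
  assumes K_pos: "\<And>t. 0 \<le> t \<Longrightarrow> 0 < K t"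
    and K_antimono: "\<And>s t. 0 \<le> s \<Longrightarrow> s \<le> t \<Longrightarrow> K t \<le> K s"
    and K_zero: "K 0 = 1"
    and sigma_pos: "0 < \<sigma>"
begin

lemma Ksig_pos: "0 \<le> \<delta> \<Longrightarrow> 0 < Ksig K \<sigma> \<delta>"
  using sigma_pos by (simp add: Ksig_def K_pos)

lemma affinity_pos: "0 < affinity K \<sigma> x p q"
  by (simp add: affinity_def Ksig_pos)

lemma degree_ge_one:
  assumes "p < n"
  shows "1 \<le> degree K \<sigma> x n p"
proof -
  have "affinity K \<sigma> x p p = 1" by (simp add: affinity_def Ksig_def K_zero)
  moreover have "affinity K \<sigma> x p p \<le> degree K \<sigma> x n p"
    unfolding degree_def using \<open>p < n\<close> affinity_pos
    by (intro member_le_sum) (auto intro: less_imp_le)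
  ultimately show ?thesis by simp
qed

lemma Ksig_le_affinity:
  assumes "dist (x p) (x q) \<le> \<delta>"
  shows "Ksig K \<sigma> \<delta> \<le> affinity K \<sigma> x p q"
proof -
  have "dist (x p) (x q) / \<sigma> \<le> \<delta> / \<sigma>"
    using assms sigma_pos by (simp add: divide_right_mono)
  then have "K (\<delta> / \<sigma>) \<le> K (dist (x p) (x q) / \<sigma>)"
    using sigma_pos by (intro K_antimono) simp_all
  then show ?thesis by (simp add: affinity_def Ksig_def dist_norm)
qed

lemma affinity_le_Ksig_e_set_dist:
  assumes "x p \<in> S" "x q \<in> U"
  shows "affinity K \<sigma> x p q \<le> Ksig_e K \<sigma> (set_dist_e S U)"
proof -
  have "S \<noteq> {}" "U \<noteq> {}" using assms by auto
  then obtain r where r: "set_dist_e S U = ereal r" "0 \<le> r" "\<forall>a\<in>S. \<forall>b\<in>U. r \<le> dist a b"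
    by (rule set_dist_e_eq_ereal)
  have "r / \<sigma> \<le> dist (x p) (x q) / \<sigma>"
    using sigma_pos r(3) assms by (simp add: divide_right_mono)
  then have "K (dist (x p) (x q) / \<sigma>) \<le> K (r / \<sigma>)"
    using sigma_pos r(2) by (intro K_antimono) simp_all
  then show ?thesis using r(1) by (simp add: affinity_def Ksig_e_def Ksig_def dist_norm)
qed

lemma Ksig_e_set_dist_nonneg: "0 \<le> Ksig_e K \<sigma> (set_dist_e S U)"
proof (cases "S = {} \<or> U = {}")
  case True
  then have "Ksig_e K \<sigma> (set_dist_e S U) = (INF t\<in>{0..}. K t)"
    by (auto simp: set_dist_e_def Ksig_e_def)
  also have "0 \<le> \<dots>"
    by (rule cINF_greatest) (auto intro: less_imp_le K_pos)
  finally show ?thesis .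
next
  case False
  then have "S \<noteq> {}" "U \<noteq> {}" by auto
  then obtain r where "set_dist_e S U = ereal r" "0 \<le> r" "\<forall>a\<in>S. \<forall>b\<in>U. r \<le> dist a b"
    by (rule set_dist_e_eq_ereal)
  then show ?thesis using Ksig_pos[of r] by (simp add: Ksig_e_def)
qed

lemma spectral_embedding_energy_le_cut:
  fixes x :: "nat \<Rightarrow> 'a::real_normed_vector"
  assumes eig: "is_sorted_eigenbasis n (norm_laplacian K \<sigma> x n) U lam"
    and disjoint: "disjoint_family_on C {..<k}" and cover: "(\<Union>l<k. C l) = x ` {..<n}"
    and nonempty: "\<And>m. m < k \<Longrightarrow> C m \<noteq> {}" and "0 < k"
  shows "(\<Sum>p<n. \<Sum>q<n. affinity K \<sigma> x p q *
            (\<Sum>a<k. (U p a / sqrt (degree K \<sigma> x n p) - U q a / sqrt (degree K \<sigma> x n q))\<^sup>2))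
       \<le> 4 * real n * real k * Max ((\<lambda>m. Ksig_e K \<sigma> (set_dist_e (C m) (x ` {..<n} - C m))) ` {..<k})"
proof -
  define \<kappa> where "\<kappa> = Max ((\<lambda>m. Ksig_e K \<sigma> (set_dist_e (C m) (x ` {..<n} - C m))) ` {..<k})"
  have boundary_le: "Ksig_e K \<sigma> (set_dist_e (C m) (x ` {..<n} - C m)) \<le> \<kappa>" if "m < k" for m
    unfolding \<kappa>_def using that by (intro Max_ge) auto
  obtain cl where cl_lt: "\<And>y. y \<in> x ` {..<n} \<Longrightarrow> cl y < k"
    and cl_iff: "\<And>y m. y \<in> x ` {..<n} \<Longrightarrow> m < k \<Longrightarrow> y \<in> C m \<longleftrightarrow> cl y = m"
    using partition_labelling[OF disjoint cover] by blast
  show ?thesis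
    unfolding \<kappa>_def[symmetric]
  proof (rule spectral_embedding_energy_le[where cl = "cl \<circ> x"])
    show "is_sorted_eigenbasis n (normalized_laplacian (affinity K \<sigma> x) (degree K \<sigma> x n)) U lam"
      using eig by (simp add: norm_laplacian_eq_normalized_laplacian)
    show "degree K \<sigma> x n p = (\<Sum>q<n. affinity K \<sigma> x p q)" for p by (simp add: degree_def)
    show "1 \<le> degree K \<sigma> x n p" if "p < n" for p using that by (rule degree_ge_one)
    show "affinity K \<sigma> x p q = affinity K \<sigma> x q p" for p q by (rule affinity_commute)
    show "(cl \<circ> x) p < k" if "p < n" for p using cl_lt that by simp
    show "\<exists>p<n. (cl \<circ> x) p = m" if "m < k" for m
    proof -
      from \<open>m < k\<close> obtain y where "y \<in> C m" using nonempty by blast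
      moreover from this obtain p where "p < n" "y = x p" using cover \<open>m < k\<close> by blast
      ultimately show ?thesis using cl_iff \<open>m < k\<close> by auto
    qed
    show "0 \<le> \<kappa>" using Ksig_e_set_dist_nonneg boundary_le[OF \<open>0 < k\<close>] by (rule order.trans)
    show "affinity K \<sigma> x p q \<le> \<kappa>" if "p < n" "q < n" "(cl \<circ> x) p \<noteq> (cl \<circ> x) q" for p q
    proof -
      have "cl (x p) < k" using cl_lt that(1) by simp
      then have "x p \<in> C (cl (x p))" "x q \<in> x ` {..<n} - C (cl (x p))"
        using cl_iff that by auto
      then have "affinity K \<sigma> x p q \<le> Ksig_e K \<sigma> (set_dist_e (C (cl (x p))) (x ` {..<n} - C (cl (x p))))"
        by (rule affinity_le_Ksig_e_set_dist[where x = x and p = p and q = q])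
      with boundary_le[OF \<open>cl (x p) < k\<close>] show ?thesis by linarith
    qed
  qed (rule \<open>0 < k\<close>)
qed

lemma cluster_sq_diff_le_energy:
  fixes x :: "nat \<Rightarrow> 'a::real_normed_vector" and f :: "nat \<Rightarrow> nat \<Rightarrow> real"
  assumes "connected_at_dist S \<delta>" "0 \<le> \<delta>" "S \<subseteq> x ` {..<n}" "inj_on x {..<n}"
    and "i < n" "j < n" "x i \<in> S" "x j \<in> S"
  shows "Ksig K \<sigma> \<delta> * (\<Sum>a<k. (f a i - f a j)\<^sup>2)
       \<le> real (n - 1) * (\<Sum>p<n. \<Sum>q<n. affinity K \<sigma> x p q * (\<Sum>a<k. (f a p - f a q)\<^sup>2))"
proof -
  define P where "P = {p. p < n \<and> x p \<in> S}"
  have "x ` P = S" using \<open>S \<subseteq> x ` {..<n}\<close> by (auto simp: P_def)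
  then have reach: "(\<lambda>p q. p \<in> P \<and> q \<in> P \<and> dist (x p) (x q) \<le> \<delta>)\<^sup>*\<^sup>* i j"
    using assms by (intro connected_at_dist_reachable) (auto simp: P_def intro: inj_on_subset)
  show ?thesis
  proof (rule reachable_sq_diff_le_energy[OF reach \<open>i < n\<close>])
    show "p < n \<and> q < n \<and> Ksig K \<sigma> \<delta> \<le> affinity K \<sigma> x p q"
      if "p \<in> P \<and> q \<in> P \<and> dist (x p) (x q) \<le> \<delta>" for p q
      using that Ksig_le_affinity[of x p q] by (simp add: P_def)
    show "0 \<le> Ksig K \<sigma> \<delta>" using Ksig_pos[OF \<open>0 \<le> \<delta>\<close>] by simp
    show "0 \<le> affinity K \<sigma> x p q" for p q using affinity_pos[of x p q] by (rule less_imp_le)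
  qed
qed

end

lemma sqrt_le_of_cubic_bound:
  assumes "0 < c" "0 \<le> \<kappa>" and bound: "c * Q \<le> real (n - 1) * (4 * real n * real k * \<kappa>)"
  shows "sqrt Q \<le> real n powr 1.5 * real k powr 0.5 * sqrt (\<kappa> / c)"
proof -
  have cube: "4 * real (n - 1) * real n \<le> real n ^ 3"
  proof (cases "n = 0")
    case False
    have "4 * (real n - 1) \<le> real n ^ 2"
      using zero_le_power2[of "real n - 2"] by (simp add: power2_diff)
    then have "4 * (real n - 1) * real n \<le> real n ^ 2 * real n" by (intro mult_right_mono) auto
    with False show ?thesis by (simp add: of_nat_diff power2_eq_square power3_eq_cube)
  qed simp
  have "c * Q \<le> (4 * real (n - 1) * real n) * (real k * \<kappa>)"
    using bound by (simp add: mult_ac)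
  also have "\<dots> \<le> real n ^ 3 * (real k * \<kappa>)"
    using cube \<open>0 \<le> \<kappa>\<close> by (intro mult_right_mono) auto
  finally have "Q \<le> real n ^ 3 * real k * (\<kappa> / c)"
    using \<open>0 < c\<close> by (simp add: field_simps)
  then have "sqrt Q \<le> sqrt (real n ^ 3) * sqrt (real k) * sqrt (\<kappa> / c)"
    by (simp flip: real_sqrt_mult)
  moreover have "real n powr 1.5 = sqrt (real n ^ 3)"
    using powr_half_sqrt_powr[of "real n" 3] by simp
  moreover have "real k powr 0.5 = sqrt (real k)"
    using powr_half_sqrt[of "real k"] by simp
  ultimately show ?thesis by simp
qed

theorem lemma2:
  fixes K :: "real \<Rightarrow> real" and \<sigma> :: real
    and n k :: nat and x :: "nat \<Rightarrow> 'a::euclidean_space"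
    and C :: "nat \<Rightarrow> 'a set" and \<delta> :: "nat \<Rightarrow> real"
    and U :: "nat \<Rightarrow> nat \<Rightarrow> real" and lam :: "nat \<Rightarrow> real"
  assumes K_pos: "\<And>t. t \<ge> 0 \<Longrightarrow> K t > 0"
    and K_mono: "\<And>s t. 0 \<le> s \<Longrightarrow> s \<le> t \<Longrightarrow> K t \<le> K s"
    and K0: "K 0 = 1"
    and sigma_pos: "\<sigma> > 0"
    and x_distinct: "inj_on x {..<n}"
    and C_nonempty: "\<And>l. l < k \<Longrightarrow> C l \<noteq> {}"
    and C_disjoint: "\<And>l l'. l < k \<Longrightarrow> l' < k \<Longrightarrow> l \<noteq> l' \<Longrightarrow> C l \<inter> C l' = {}"
    and C_cover: "(\<Union>l<k. C l) = x ` {..<n}"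
    and delta_nonneg: "\<And>l. l < k \<Longrightarrow> \<delta> l \<ge> 0"
    and C_conn: "\<And>l. l < k \<Longrightarrow> connected_at_dist (C l) (\<delta> l)"
    and U_eig: "is_sorted_eigenbasis n (norm_laplacian K \<sigma> x n) U lam"
    and i_lt: "i < n" and j_lt: "j < n" and l_lt: "l < k"
    and xi: "x i \<in> C l" and xj: "x j \<in> C l"
  shows "sqrt (\<Sum>a<k. (U i a / sqrt (degree K \<sigma> x n i) - U j a / sqrt (degree K \<sigma> x n j))\<^sup>2)
     \<le> Max ((\<lambda>m. real n powr 1.5 * real k powr 0.5 *
              sqrt (Ksig_e K \<sigma> (set_dist_e (C m) (x ` {..<n} - C m)) / Ksig K \<sigma> (\<delta> l))) ` {..<k})"
proof -
  interpret decreasing_kernel K \<sigma>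
    using K_pos K_mono K0 sigma_pos by unfold_locales blast+
  define f where "f a p = U p a / sqrt (degree K \<sigma> x n p)" for a p
  define KE where "KE m = Ksig_e K \<sigma> (set_dist_e (C m) (x ` {..<n} - C m))" for m
  define Kd where "Kd = Ksig K \<sigma> (\<delta> l)"
  obtain m0 where "m0 < k" and m0_max: "Max (KE ` {..<k}) = KE m0"
    using Max_in[of "KE ` {..<k}"] l_lt by fastforce
  have "disjoint_family_on C {..<k}" using C_disjoint by (auto simp: disjoint_family_on_def)
  then have energy: "(\<Sum>p<n. \<Sum>q<n. affinity K \<sigma> x p q * (\<Sum>a<k. (f a p - f a q)\<^sup>2))
      \<le> 4 * real n * real k * KE m0"
    unfolding f_def m0_max[symmetric] unfolding KE_def using l_lt
    by (intro spectral_embedding_energy_le_cut[OF U_eig _ C_cover C_nonempty]) auto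
  have "C l \<subseteq> x ` {..<n}" using C_cover l_lt by blast
  then have "Kd * (\<Sum>a<k. (f a i - f a j)\<^sup>2)
      \<le> real (n - 1) * (\<Sum>p<n. \<Sum>q<n. affinity K \<sigma> x p q * (\<Sum>a<k. (f a p - f a q)\<^sup>2))"
    unfolding Kd_def using C_conn[OF l_lt] delta_nonneg[OF l_lt] x_distinct i_lt j_lt xi xj
    by (intro cluster_sq_diff_le_energy)
  also have "\<dots> \<le> real (n - 1) * (4 * real n * real k * KE m0)"
    using energy by (intro mult_left_mono) auto
  finally have "sqrt (\<Sum>a<k. (f a i - f a j)\<^sup>2) \<le> real n powr 1.5 * real k powr 0.5 * sqrt (KE m0 / Kd)"
    using Ksig_pos[OF delta_nonneg[OF l_lt]] Ksig_e_set_dist_nonneg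
    by (intro sqrt_le_of_cubic_bound) (auto simp: Kd_def KE_def)
  also have "\<dots> \<le> Max ((\<lambda>m. real n powr 1.5 * real k powr 0.5 * sqrt (KE m / Kd)) ` {..<k})"
    using \<open>m0 < k\<close> by (intro Max_ge) auto
  finally show ?thesis by (simp add: f_def KE_def Kd_def)
qed

end
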